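(* For every integer $n\ge1$, the polynomials $\operatorname{num}(n,x)$ and $\operatorname{den}(n,x)$ are coprime in $\mathbb{Z}[x]$, i.e. $\gcd(\operatorname{num}(n,x),\operatorname{den}(n,x))=1$.
   Context: A partition $\lambda$ of $n\ge 0$ (written $\lambda\vdash n$) is a finite nonincreasing sequence of positive integers summing to $n$; $m_\lambda(i)$ denotes the number of parts of $\lambda$ equal to $i$ (the empty partition is the unique partition of $0$). For $\lambda\vdash n$ define $$h_\lambda(x)=\prod_{i\ge1}(1+x^i)^{\lfloor n/i\rfloor-m_\lambda(i)}\in\mathbb{Z}[x],\qquad \operatorname{den}^*(n,x)=\prod_{i\ge1}(1+x^i)^{\lfloor n/i\rfloor},$$ (finite products since $\lfloor n/i\rfloor=0$ for $i>n$), so that $\sum_{\lambda\vdash n}\prod_j(1+x^{\lambda_j})^{-1}=\sum_{\lambda\vdash n}h_\lambda(x)/\operatorname{den}^*(n,x)$. Let $G(n,x)=\gcd\{h_\lambda(x):\lambda\vdash n\}$ in $\mathbb{Z}[x]$ (normalized to have positive leading coefficient; it is a product of cyclotomic polynomials), and define $$\operatorname{num}(n,x)=\frac{1}{G(n,x)}\sum_{\lambda\vdash n}h_\lambda(x),\qquad \operatorname{den}(n,x)=\frac{\operatorname{den}^*(n,x)}{G(n,x)}.$$ Note $G(n,x)$ is the gcd of the summands, not of $\sum_\lambda h_\lambda$ and $\operatorname{den}^*$. *)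

theory Defs
  imports "HOL-Library.Multiset" "HOL-Computational_Algebra.Computational_Algebra"
begin

(* Partitions of n, represented as multisets of positive parts summing to n.
   count lam i = m_lambda(i). *)
definition partitions :: "nat \<Rightarrow> nat multiset set" where
  "partitions n = {lam. (\<forall>i\<in>#lam. 0 < i) \<and> sum_mset lam = n}"

definition onepx :: "nat \<Rightarrow> int poly" where
  "onepx i = 1 + monom 1 i"

(* h_lambda(x) = prod_{i>=1} (1+x^i)^(floor(n/i) - m_lambda(i)) ; factors with i > n are 1 *)
definition h_part :: "nat \<Rightarrow> nat multiset \<Rightarrow> int poly" where
  "h_part n lam = (\<Prod>i\<in>{1..n}. onepx i ^ (n div i - count lam i))"

definition den_star :: "nat \<Rightarrow> int poly" where
  "den_star n = (\<Prod>i\<in>{1..n}. onepx i ^ (n div i))"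

(* G(n,x): gcd of the summands, normalized (positive leading coefficient) *)
definition G :: "nat \<Rightarrow> int poly" where
  "G n = Gcd (h_part n ` partitions n)"

definition num :: "nat \<Rightarrow> int poly" where
  "num n = (\<Sum>lam\<in>partitions n. h_part n lam) div G n"

definition den :: "nat \<Rightarrow> int poly" where
  "den n = den_star n div G n"

end

(*
  A common prime factor p of num n and den n divides some 1 + x^i with i <= n, hence vanishes at a
  root z of unity with z^i = -1, and z is a primitive 2k-th root of unity for some k dividing i.
  Dedekind's argument (an integer polynomial vanishing at a root of unity z vanishes at z^t for all
  t coprime to the order of z, because h(x^q) = h(x)^q modulo a prime q) shows that p vanishes at
  w = cis (pi / k).  So it suffices to show that num n does not vanish at w.

  The multiplicity of w as a root of h_lambda is the sum of n div i - m_lambda(i) over the odd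
  multiples i <= n of k.  It is minimal, and then equal to the multiplicity for G n, exactly for the
  partitions lambda = k^(n div k) + mu with mu a partition of n mod k.  Hence only these lambda
  contribute to the value of num n at w, and their contributions are positive real multiples of
  one nonzero complex number, since 1 + w^i = 2 cos (pi i / 2k) cis (pi i / 2k) with a positive
  cosine for the parts i < k of mu.
*)

theory Submission
  imports Defs
begin

section \<open>Integer polynomials as complex polynomials\<close>

abbreviation cpoly :: "int poly \<Rightarrow> complex poly" where
  "cpoly \<equiv> map_poly of_int"

lemma coeff_map_poly_of_int [simp]: "coeff (map_poly of_int p) n = of_int (coeff p n)"
  by (simp add: coeff_map_poly)

lemma map_poly_of_int_add [simp]:
  "map_poly of_int (p + q) = map_poly of_int p + (map_poly of_int q :: 'a::comm_ring_1 poly)"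
  by (rule poly_eqI) simp

lemma map_poly_of_int_mult [simp]:
  "map_poly of_int (p * q) = map_poly of_int p * (map_poly of_int q :: 'a::comm_ring_1 poly)"
  by (rule poly_eqI) (simp add: coeff_mult)

lemma map_poly_of_int_diff [simp]:
  "map_poly of_int (p - q) = map_poly of_int p - (map_poly of_int q :: 'a::comm_ring_1 poly)"
  by (rule poly_eqI) simp

lemma map_poly_of_int_power [simp]:
  "map_poly of_int (p ^ n) = (map_poly of_int p :: 'a::comm_ring_1 poly) ^ n"
  by (induction n) simp_all

lemma map_poly_of_int_prod [simp]:
  "map_poly of_int (prod f A) = (\<Prod>x\<in>A. map_poly of_int (f x) :: 'a::comm_ring_1 poly)"
  by (induction A rule: infinite_finite_induct) simp_all

lemma map_poly_of_int_sum [simp]: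
  "map_poly of_int (sum f A) = (\<Sum>x\<in>A. map_poly of_int (f x) :: 'a::comm_ring_1 poly)"
  by (induction A rule: infinite_finite_induct) simp_all

lemma map_poly_of_int_monom [simp]:
  "map_poly of_int (monom c n) = (monom (of_int c) n :: 'a::comm_ring_1 poly)"
  by (simp add: map_poly_monom)

lemma map_poly_of_int_smult [simp]:
  "map_poly of_int (smult c p) = smult (of_int c) (map_poly of_int p :: 'a::comm_ring_1 poly)"
  by (rule poly_eqI) simp

lemma map_poly_of_int_pcompose:
  "map_poly of_int (pcompose p q) = pcompose (map_poly of_int p) (map_poly of_int q :: 'a::comm_ring_1 poly)"
  by (induction p) (simp_all add: pcompose_pCons map_poly_pCons)

lemma map_poly_of_int_dvd:
  "p dvd q \<Longrightarrow> map_poly of_int p dvd (map_poly of_int q :: 'a::comm_ring_1 poly)"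
  by (metis dvd_def map_poly_of_int_mult)

lemma poly_cpoly_eq_0_if_dvd:
  "p dvd q \<Longrightarrow> poly (cpoly p) z = 0 \<Longrightarrow> poly (cpoly q) z = 0"
  by (auto elim!: dvdE)

lemma map_poly_of_int_eq_0_iff [simp]:
  "(map_poly of_int p :: 'a::ring_char_0 poly) = 0 \<longleftrightarrow> p = 0"
  by (simp add: poly_eq_iff)

lemma degree_map_poly_of_int [simp]:
  "degree (map_poly of_int p :: 'a::ring_char_0 poly) = degree p"
  by (rule degree_map_poly) simp

section \<open>Congruences modulo a prime\<close>

lemma prime_dvd_add_power_diff:
  fixes a b :: "'a::comm_ring_1"
  assumes "prime p"
  shows "of_nat p dvd (a + b) ^ p - a ^ p - b ^ p"
proof -
  have p0: "p > 0" using assms prime_gt_0_nat by blast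
  have "{..p} = insert 0 (insert p {1..<p})" using p0 by auto
  then have "(a + b) ^ p - a ^ p - b ^ p = (\<Sum>k\<in>{1..<p}. of_nat (p choose k) * a ^ k * b ^ (p - k))"
    using p0 by (simp add: binomial_ring)
  also have "of_nat p dvd \<dots>"
  proof (rule dvd_sum)
    fix k assume "k \<in> {1..<p}"
    then have "p dvd (p choose k)" using dvd_choose_prime assms by auto
    then obtain c where "p choose k = p * c" by blast
    then show "of_nat p dvd of_nat (p choose k) * a ^ k * b ^ (p - k)"
      by (simp add: mult.assoc)
  qed
  finally show ?thesis .
qed

lemma diff_dvd_power_diff:
  fixes a b :: "'a::comm_ring_1"
  shows "a - b dvd a ^ n - b ^ n"
  by (metis power_diff_sumr2 dvd_triv_left)

lemma fermat_theorem_int: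
  fixes a :: int
  assumes p: "prime p"
  shows "int p dvd a ^ p - a"
proof -
  have nonneg: "int p dvd b ^ p - b" if "0 \<le> b" for b :: int
    using that
  proof (induction b rule: int_ge_induct)
    case base
    then show ?case using p prime_gt_0_nat by (simp add: zero_power)
  next
    case (step b)
    have "(b + 1) ^ p - (b + 1) = ((b + 1) ^ p - b ^ p - 1 ^ p) + (b ^ p - b)"
      by simp
    moreover have "int p dvd (b + 1) ^ p - b ^ p - 1 ^ p"
      using prime_dvd_add_power_diff[OF p, of b 1] by simp
    ultimately show ?case using step.IH by (metis dvd_add)
  qed
  define b where "b = a mod int p"
  have "int p dvd a - b" by (simp add: b_def mod_eq_dvd_iff)
  moreover have "a - b dvd a ^ p - b ^ p" by (rule diff_dvd_power_diff)
  moreover have "a ^ p - a = (a ^ p - b ^ p) - (a - b) + (b ^ p - b)" by simp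
  moreover have "int p dvd b ^ p - b" using nonneg p prime_gt_0_nat by (simp add: b_def)
  ultimately show ?thesis by (metis dvd_add dvd_diff dvd_trans)
qed

lemma prime_dvd_power_diff_pcompose_monom:
  fixes h :: "int poly"
  assumes p: "prime p"
  shows "[:int p:] dvd h ^ p - pcompose h (monom 1 p)"
proof (induction h)
  case 0
  then show ?case using p prime_gt_0_nat by (simp add: zero_power)
next
  case (pCons a h)
  let ?x = "monom (1::int) 1" and ?M = "monom (1::int) p"
  have split: "pCons a h = [:a:] + ?x * h"
    by (rule poly_eqI) (auto simp: coeff_pCons coeff_monom_mult split: nat.split)
  have "pCons a h ^ p - pcompose (pCons a h) ?M = ([:a:] + ?x * h) ^ p - ([:a:] + ?M * pcompose h ?M)"
    unfolding pcompose_pCons by (subst split) simp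
  also have "\<dots> = (([:a:] + ?x * h) ^ p - [:a:] ^ p - (?x * h) ^ p) + ([:a:] ^ p - [:a:])
      + ?M * (h ^ p - pcompose h ?M)"
    by (simp add: power_mult_distrib monom_power algebra_simps)
  finally have "pCons a h ^ p - pcompose (pCons a h) ?M = \<dots>" .
  moreover have "[:int p:] dvd ([:a:] + ?x * h) ^ p - [:a:] ^ p - (?x * h) ^ p"
    using prime_dvd_add_power_diff[OF p, of "[:a:]" "?x * h"] by (simp add: of_nat_poly)
  moreover have "[:int p:] dvd [:a:] ^ p - [:a:]"
    using fermat_theorem_int[OF p, of a] by (simp add: poly_const_pow)
  ultimately show ?case
    using pCons.IH by (metis dvd_add dvd_mult)
qed

lemma degree_minus_leading_term_less:
  fixes q :: "'a::ab_group_add poly"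
  assumes "degree q \<noteq> 0"
  shows "degree (q - monom (lead_coeff q) (degree q)) < degree q"
proof -
  let ?r = "q - monom (lead_coeff q) (degree q)"
  have "degree ?r \<le> degree q"
    by (rule degree_diff_le[OF order_refl degree_monom_le])
  moreover have "coeff ?r (degree q) = 0" by simp
  then have "degree ?r \<noteq> degree q"
    using assms by (metis leading_coeff_0_iff degree_0)
  ultimately show ?thesis by simp
qed

lemma prime_dvd_const_if_dvd_const_minus_mult:
  fixes p c :: int and f q :: "int poly"
  assumes p: "prime p" and f: "degree f \<noteq> 0" "\<not> p dvd lead_coeff f"
    and "[:p:] dvd [:c:] - f * q"
  shows "p dvd c"
  using assms(4)
proof (induction "degree q" arbitrary: q rule: less_induct)
  \<comment> \<open>Leading coefficients of q divisible by p can be removed; the first one that is not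
    survives as the coefficient of degree f + degree q.\<close>
  case less
  show ?case
  proof (cases "p dvd lead_coeff q")
    case True
    then obtain b where b: "lead_coeff q = p * b" by blast
    define q' where "q' = q - monom (lead_coeff q) (degree q)"
    have "monom (lead_coeff q) (degree q) = [:p:] * monom b (degree q)"
      by (simp add: b flip: smult_monom)
    then have "[:c:] - f * q' = ([:c:] - f * q) + [:p:] * (f * monom b (degree q))"
      by (simp add: q'_def algebra_simps)
    then have q': "[:p:] dvd [:c:] - f * q'"
      using less.prems by (metis dvd_add dvd_triv_left)
    show ?thesis
    proof (cases "degree q = 0")
      case True
      then have "q' = 0" by (simp add: q'_def monom_0 degree_0_id)
      then show ?thesis using q' by simp
    next
      case False
      then have "degree q' < degree q"
        by (simp add: q'_def degree_minus_leading_term_less)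
      then show ?thesis using less.hyps q' by blast
    qed
  next
    case False
    have "coeff ([:c:] - f * q) (degree f + degree q) = - (lead_coeff f * lead_coeff q)"
      using f by (simp add: coeff_mult_degree_sum coeff_pCons split: nat.split)
    moreover have "p dvd coeff ([:c:] - f * q) (degree f + degree q)"
      using less.prems const_poly_dvd_iff by blast
    ultimately have "p dvd lead_coeff f * lead_coeff q" by simp
    then show ?thesis using p f False prime_dvd_mult_iff by blast
  qed
qed

section \<open>Roots of unity\<close>

lemma obtain_minimal_int_poly:
  fixes z :: complex
  assumes "poly (cpoly F) z = 0" "F \<noteq> 0"
  obtains f where "poly (cpoly f) z = 0" "content f = 1"
    "\<And>g. poly (cpoly g) z = 0 \<Longrightarrow> f dvd g"
proof -
  obtain g where g: "g \<noteq> 0" "poly (cpoly g) z = 0"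
    and min: "\<And>g'. g' \<noteq> 0 \<Longrightarrow> poly (cpoly g') z = 0 \<Longrightarrow> degree g \<le> degree g'"
    using ex_has_least_nat[of "\<lambda>g. g \<noteq> 0 \<and> poly (cpoly g) z = 0" F degree] assms by blast
  define f where "f = primitive_part g"
  have "cpoly g = smult (of_int (content g)) (cpoly f)"
    by (metis content_times_primitive_part f_def map_poly_of_int_smult)
  then have fz: "poly (cpoly f) z = 0" using g by simp
  have cf: "content f = 1" using g by (simp add: f_def content_primitive_part)
  have "f dvd h" if hz: "poly (cpoly h) z = 0" for h
  proof -
    have f0: "f \<noteq> 0" using cf by auto
    obtain q r where qr: "pseudo_divmod h f = (q, r)" by fastforce
    define c where "c = lead_coeff f ^ (Suc (degree h) - degree f)"
    have e: "smult c h = f * q + r" and r: "r = 0 \<or> degree r < degree f"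
      using pseudo_divmod[OF f0 qr] by (auto simp: c_def)
    have "r = smult c h - f * q" using e by simp
    then have "poly (cpoly r) z = 0" using hz fz by simp
    moreover have "degree f = degree g" by (simp add: f_def)
    ultimately have "r = 0" using r min[of r] by fastforce
    then have "f dvd smult c h" using e by simp
    then have "fract_poly f dvd smult (to_fract c) (fract_poly h)"
      by (metis fract_poly_dvd fract_poly_smult)
    then have "fract_poly f dvd fract_poly h" using f0 by (simp add: c_def dvd_smult_cancel)
    then show "f dvd h" using cf by (rule fract_poly_dvdD)
  qed
  then show ?thesis using that fz cf by blast
qed

lemma x_pow_minus_one_factors_bezout:
  fixes f h :: "int poly"
  assumes fh: "monom 1 m - 1 = f * h" and m: "m > 0"
  shows "[:int m:] = h * (monom 1 1 * pderiv f - smult (int m) f) + f * (monom 1 1 * pderiv h)"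
  \<comment> \<open>This is x X' - m X = m for X = x^m - 1 = f h.\<close>
proof -
  have "f * pderiv h + h * pderiv f = monom (int m) (m - 1)"
    by (metis fh pderiv_mult pderiv_diff pderiv_monom pderiv_1 diff_zero of_nat_1 mult_1_right of_nat_mult)
  then have "monom 1 1 * (f * pderiv h + h * pderiv f) = monom (int m) m"
    using m by (simp add: mult_monom)
  moreover have "smult (int m) (f * h) = monom (int m) m - [:int m:]"
    by (simp flip: fh add: smult_diff_right smult_monom one_pCons)
  moreover have "h * (monom 1 1 * pderiv f - smult (int m) f) + f * (monom 1 1 * pderiv h) =
      monom 1 1 * (f * pderiv h + h * pderiv f) - smult (int m) (f * h)"
    by (simp add: algebra_simps)
  ultimately show ?thesis by simp
qed

lemma prime_dvd_of_factor_dvd_cofactor_pcompose: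
  fixes f h :: "int poly"
  assumes fh: "monom 1 m - 1 = f * h" and m: "m > 0" and q: "prime q"
    and f: "degree f \<noteq> 0" and S: "pcompose h (monom 1 q) = f * S"
  shows "q dvd m"
  \<comment> \<open>Modulo q, f divides h(x^q) = h^q, while the identity m = h U + f V makes f and h
    coprime unless q divides m.\<close>
proof -
  have "lead_coeff (monom 1 m - 1 :: int poly) = lead_coeff (-1 + monom 1 m)" by simp
  then have "lead_coeff (monom 1 m - 1 :: int poly) = 1"
    using m lead_coeff_add_le[of "-1" "monom 1 m"] by (simp add: degree_monom_eq)
  then have lfh: "lead_coeff f * lead_coeff h = 1" by (simp add: fh lead_coeff_mult)
  have lf: "\<not> int q dvd lead_coeff f"
  proof
    assume "int q dvd lead_coeff f"
    then have "int q dvd 1" using lfh by (metis dvd_mult2)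
    then show False using q prime_gt_1_nat by simp
  qed
  obtain R where R: "h ^ q - pcompose h (monom 1 q) = [:int q:] * R"
    using prime_dvd_power_diff_pcompose_monom[OF q] by blast
  define U V where "U = monom 1 1 * pderiv f - smult (int m) f" and "V = monom 1 1 * pderiv h"
  have mUV: "[:int m:] = h * U + f * V"
    unfolding U_def V_def using x_pow_minus_one_factors_bezout fh m by simp
  obtain W where "(h * U + f * V) ^ q - (h * U) ^ q = f * V * W"
    using diff_dvd_power_diff[of "h * U + f * V" "h * U" q] by auto
  moreover have "[:int m ^ q:] = (h * U + f * V) ^ q"
    by (simp only: flip: mUV poly_const_pow)
  ultimately have "[:int m ^ q:] = f * (V * W + S * U ^ q) + [:int q:] * (R * U ^ q)"
    using R S by (simp add: power_mult_distrib algebra_simps)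
  then have "[:int q:] dvd [:int m ^ q:] - f * (V * W + S * U ^ q)"
    by (metis add_diff_cancel_left' dvd_triv_left)
  then have "int q dvd int m ^ q"
    using prime_dvd_const_if_dvd_const_minus_mult f lf q by (metis prime_nat_int_transfer)
  then have "q dvd m ^ q" by (metis of_nat_dvd_iff of_nat_power)
  then show ?thesis using q prime_dvd_power by blast
qed

lemma root_of_unity_prime_power_root:
  fixes F :: "int poly" and z :: complex
  assumes m: "m > 0" "z ^ m = 1" and q: "prime q" "\<not> q dvd m"
    and Fz: "poly (cpoly F) z = 0"
  shows "poly (cpoly F) (z ^ q) = 0"
proof -
  define X :: "int poly" where "X = monom 1 m - 1"
  have X0: "X \<noteq> 0" using m by (auto simp: X_def poly_eq_iff coeff_1 intro!: exI[of _ m])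
  have Xz: "poly (cpoly X) z = 0" using m by (simp add: X_def poly_monom)
  then obtain f where fz: "poly (cpoly f) z = 0" and cf: "content f = 1"
    and fdvd: "\<And>g. poly (cpoly g) z = 0 \<Longrightarrow> f dvd g"
    using obtain_minimal_int_poly X0 by blast
  obtain h where Xfh: "X = f * h" using fdvd[OF Xz] by blast
  have "poly (cpoly f) (z ^ q) = 0"
  proof (rule ccontr)
    assume fzq: "poly (cpoly f) (z ^ q) \<noteq> 0"
    have "poly (cpoly X) (z ^ q) = 0"
      using m by (simp add: X_def poly_monom flip: power_mult) (simp add: mult.commute power_mult)
    then have "poly (cpoly h) (z ^ q) = 0" using fzq Xfh by simp
    then have "poly (cpoly (pcompose h (monom 1 q))) z = 0"
      by (simp add: map_poly_of_int_pcompose poly_pcompose poly_monom)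
    then obtain S where "pcompose h (monom 1 q) = f * S" using fdvd by blast
    moreover have "degree f \<noteq> 0"
    proof
      assume "degree f = 0"
      then obtain c where "f = [:c:]" by (rule degree_eq_zeroE)
      then show False using fz cf by (simp add: map_poly_pCons)
    qed
    ultimately have "q dvd m"
      using prime_dvd_of_factor_dvd_cofactor_pcompose Xfh m q(1) by (simp add: X_def)
    then show False using q(2) by simp
  qed
  then show ?thesis using fdvd[OF Fz] by (rule poly_cpoly_eq_0_if_dvd[rotated])
qed

lemma root_of_unity_coprime_power_root:
  fixes F :: "int poly" and z :: complex
  assumes m: "m > 0" "z ^ m = 1" and Fz: "poly (cpoly F) z = 0"
  shows "coprime t m \<Longrightarrow> poly (cpoly F) (z ^ t) = 0"
proof (induction t rule: prime_divisors_induct)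
  case zero
  then have "z = 1" using m by simp
  then show ?case using Fz by simp
next
  case (unit t)
  then show ?case using Fz by simp
next
  case (factor q t)
  then have "\<not> q dvd m" "coprime t m"
    by (auto simp: prime_imp_coprime_nat coprime_commute dest: coprime_common_divisor_nat)
  moreover have "(z ^ t) ^ m = 1" using m by (metis mult.commute power_mult power_one)
  ultimately show ?case
    using root_of_unity_prime_power_root[of m "z ^ t" q F] m factor
    by (simp add: power_mult[symmetric] mult.commute)
qed

lemma cis_pi_times_nat: "cis (pi * real j) = (-1) ^ j"
  by (simp add: DeMoivre flip: cis_pi) (simp add: mult.commute)

lemma minus_one_root_eq_cis_power:
  fixes z :: complex
  assumes i: "i > 0" and zi: "z ^ i = -1"
  obtains k a where "k > 0" "k dvd i" "coprime a (2 * k)" "z = cis (pi / k) ^ a"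
proof -
  have "z ^ (2 * i) = 1" using zi by (simp add: power_mult mult.commute[of 2 i])
  then obtain j where "z = cis (2 * pi * real j / real (2 * i))"
    using bij_betw_imp_surj_on[OF bij_betw_roots_unity[of "2 * i"]] i by force
  then have zj: "z = cis (pi * real j / real i)" by simp
  then have "z ^ i = (-1) ^ j"
    using i by (simp add: DeMoivre cis_pi_times_nat)
  then have "odd j" using zi by (cases "even j") simp_all
  define g where "g = gcd j i"
  define a k where "a = j div g" and "k = i div g"
  have g: "g > 0" using i by (simp add: g_def)
  have ja: "j = a * g" and ik: "i = k * g" by (simp_all add: a_def k_def g_def)
  have "coprime a k" unfolding a_def k_def g_def using i by (intro div_gcd_coprime) auto
  moreover have "odd a" using \<open>odd j\<close> ja by simp
  ultimately have "coprime a (2 * k)" by simp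
  moreover have "k > 0" using ik i by (cases k) auto
  moreover have "pi * real j / real i = real a * (pi / real k)" using g by (simp add: ja ik field_simps)
  then have "z = cis (pi / k) ^ a" by (simp add: zj DeMoivre)
  ultimately show ?thesis using that ik by simp
qed

lemma int_poly_minus_one_root_cis_root:
  fixes F :: "int poly" and z :: complex
  assumes Fz: "poly (cpoly F) z = 0" and "i > 0" "z ^ i = -1"
  obtains k where "k > 0" "k dvd i" "poly (cpoly F) (cis (pi / k)) = 0"
proof -
  obtain k a where k: "k > 0" "k dvd i" and cop: "coprime a (2 * k)" and zw: "z = cis (pi / k) ^ a"
    using minus_one_root_eq_cis_power assms(2,3) by blast
  let ?w = "cis (pi / k)"
  have w2k: "?w ^ (2 * k) = 1" using k by (simp add: DeMoivre)
  then have z2k: "z ^ (2 * k) = 1" by (metis zw mult.commute power_mult power_one)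
  have "a \<noteq> 0" using cop k by (intro notI) simp
  then obtain x y where axy: "a * x = (2 * k) * y + 1" using bezout_nat[of a "2 * k"] cop by auto
  have "z ^ x = (?w ^ (2 * k)) ^ y * ?w"
    by (simp only: zw axy flip: power_mult) (simp add: power_add power_mult)
  then have "z ^ x = ?w" using w2k by simp
  moreover have "coprime x (2 * k)"
  proof (rule coprimeI)
    fix d assume "d dvd x" "d dvd 2 * k"
    then have "d dvd a * x - (2 * k) * y" by (simp add: dvd_diff_nat)
    then show "is_unit d" by (simp add: axy)
  qed
  ultimately show ?thesis
    using root_of_unity_coprime_power_root[of "2 * k" z F x] Fz z2k k that by auto
qed

section \<open>Partitions\<close>

lemma sum_mset_eq_sum_count:
  fixes f :: "'a \<Rightarrow> nat"
  assumes "finite A" "set_mset M \<subseteq> A"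
  shows "(\<Sum>x\<in>#M. f x) = (\<Sum>i\<in>A. f i * count M i)"
  using assms(2)
proof (induction M)
  case (add x M)
  then have "(\<Sum>i\<in>A. f i * count (add_mset x M) i) = (\<Sum>i\<in>A. f i * count M i + (if i = x then f i else 0))"
    by (intro sum.cong) auto
  also have "\<dots> = (\<Sum>i\<in>A. f i * count M i) + f x"
    using assms(1) add.prems by (simp add: sum.distrib)
  finally show ?case using add by simp
qed simp

lemma set_mset_partition: "lam \<in> partitions n \<Longrightarrow> set_mset lam \<subseteq> {1..n}"
proof
  fix x assume lam: "lam \<in> partitions n" and x: "x \<in># lam"
  then have "0 < x" by (auto simp: partitions_def)
  moreover have "sum_mset lam = x + sum_mset (lam - {#x#})"
    using x by (simp add: sum_mset.remove)
  then have "x \<le> n" using lam by (simp add: partitions_def)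
  ultimately show "x \<in> {1..n}" by simp
qed

lemma partition_weighted_count_sum:
  assumes "lam \<in> partitions n"
  shows "(\<Sum>i\<in>{1..n}. i * count lam i) = n"
proof -
  have "(\<Sum>i\<in>{1..n}. i * count lam i) = (\<Sum>x\<in>#lam. x)"
    using sum_mset_eq_sum_count[of "{1..n}" lam "\<lambda>x. x"] set_mset_partition[OF assms] by simp
  then show ?thesis using assms by (simp add: partitions_def)
qed

lemma count_partition_le:
  assumes lam: "lam \<in> partitions n" and i: "0 < i"
  shows "count lam i \<le> n div i"
proof (cases "i \<le> n")
  case True
  have "i * count lam i \<le> (\<Sum>i\<in>{1..n}. i * count lam i)"
    using True i by (intro member_le_sum) auto
  then show ?thesis
    using partition_weighted_count_sum[OF lam] i by (simp add: less_eq_div_iff_mult_less_eq mult.commute)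
next
  case False
  then have "i \<notin># lam" using set_mset_partition[OF lam] by auto
  then show ?thesis by (simp add: not_in_iff)
qed

lemma finite_partitions: "finite (partitions n)"
proof (rule finite_subset)
  show "partitions n \<subseteq> (\<Union>s\<le>n. multisets_of_size {1..n} s)"
  proof
    fix lam assume lam: "lam \<in> partitions n"
    have "size lam = (\<Sum>x\<in>#lam. 1)" by (rule size_eq_sum_mset)
    also have "\<dots> = (\<Sum>i\<in>{1..n}. count lam i)"
      using sum_mset_eq_sum_count[of "{1..n}" lam "\<lambda>x. 1"] set_mset_partition[OF lam] by simp
    also have "\<dots> \<le> (\<Sum>i\<in>{1..n}. i * count lam i)" by (intro sum_mono) auto
    also have "\<dots> = n" using partition_weighted_count_sum[OF lam] .
    finally show "lam \<in> (\<Union>s\<le>n. multisets_of_size {1..n} s)"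
      using set_mset_partition[OF lam] by (auto simp: multisets_of_size_def)
  qed
qed auto

section \<open>The multiplicity of cis (pi / k) as a root\<close>

lemma cis_pi_div_power_eq_minus_one_iff:
  assumes k: "0 < k"
  shows "cis (pi / real k) ^ i = -1 \<longleftrightarrow> k dvd i \<and> odd (i div k)"
proof -
  define q r where "q = i div k" and "r = i mod k"
  have "real i = real q * real k + real r"
    unfolding q_def r_def by (metis div_mult_mod_eq of_nat_add of_nat_mult)
  then have "real i * (pi / real k) = pi * real q + pi * real r / real k"
    using k by (simp add: field_simps)
  then have e: "cis (pi / real k) ^ i = (-1) ^ q * cis (pi * real r / real k)"
    by (simp add: DeMoivre cis_pi_times_nat flip: cis_mult)
  show ?thesis
  proof (cases "r = 0")
    case True
    then show ?thesis using e by (cases "even q") (simp_all add: q_def r_def dvd_eq_mod_eq_0)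
  next
    case False
    have "0 < pi * real r / real k" "pi * real r / real k < pi"
      using False k by (simp_all add: r_def field_simps)
    then have "sin (pi * real r / real k) \<noteq> 0" using sin_gt_zero by fastforce
    then have "cis (pi * real r / real k) \<noteq> 1" "cis (pi * real r / real k) \<noteq> -1"
      by (auto simp: complex_eq_iff)
    then have "cis (pi / real k) ^ i \<noteq> -1" using e by (cases "even q") auto
    moreover have "\<not> k dvd i" using False by (simp add: r_def dvd_eq_mod_eq_0)
    ultimately show ?thesis by simp
  qed
qed

lemma order_prod:
  fixes P :: "'b \<Rightarrow> 'a::idom poly"
  assumes "finite A" "\<And>i. i \<in> A \<Longrightarrow> P i \<noteq> 0"
  shows "order x (\<Prod>i\<in>A. P i) = (\<Sum>i\<in>A. order x (P i))"
  using assms by (induction A rule: finite_induct) (simp_all add: order_mult)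

lemma order_power:
  fixes p :: "'a::idom poly"
  shows "p \<noteq> 0 \<Longrightarrow> order x (p ^ n) = n * order x p"
  by (induction n) (simp_all add: order_mult)

lemma onepx_nonzero [simp]: "onepx i \<noteq> 0"
proof
  assume "onepx i = 0"
  then have "coeff (onepx i) 0 = 0" by simp
  then show False by (simp add: onepx_def coeff_monom split: if_splits)
qed

lemma poly_cpoly_onepx: "poly (cpoly (onepx i)) w = 1 + w ^ i"
  by (simp add: onepx_def poly_monom)

lemma order_onepx:
  assumes i: "0 < i"
  shows "order w (cpoly (onepx i)) = (if w ^ i = -1 then 1 else 0)"
proof (cases "w ^ i = -1")
  case False
  then have "poly (cpoly (onepx i)) w \<noteq> 0" by (simp add: poly_cpoly_onepx add_eq_0_iff)
  then show ?thesis using False by (simp add: order_0I)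
next
  case True
  then have "w \<noteq> 0" using i by (cases i) auto
  have "pderiv (cpoly (onepx i)) = monom (of_nat i) (i - 1)"
    by (simp add: onepx_def pderiv_add pderiv_monom)
  then have "poly (pderiv (cpoly (onepx i))) w \<noteq> 0" using \<open>w \<noteq> 0\<close> i by (simp add: poly_monom)
  then have "order w (pderiv (cpoly (onepx i))) = 0" by (rule order_0I)
  moreover have "poly (cpoly (onepx i)) w = 0" using True by (simp add: poly_cpoly_onepx)
  ultimately show ?thesis using order_pderiv[of "cpoly (onepx i)" w] True by simp
qed

definition odd_multiples :: "nat \<Rightarrow> nat \<Rightarrow> nat set" where
  "odd_multiples n k = {i \<in> {1..n}. k dvd i \<and> odd (i div k)}"

lemma finite_odd_multiples [simp]: "finite (odd_multiples n k)"
  by (simp add: odd_multiples_def)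

lemma self_in_odd_multiples: "0 < k \<Longrightarrow> k \<le> n \<Longrightarrow> k \<in> odd_multiples n k"
  by (auto simp: odd_multiples_def)

lemma odd_multiples_ge_three_times:
  assumes k: "0 < k" and i: "i \<in> odd_multiples n k" "i \<noteq> k"
  shows "3 * k \<le> i"
proof -
  obtain j where ij: "i = k * j" "odd j"
    using i k by (auto simp: odd_multiples_def elim!: dvdE)
  then have "j \<noteq> 1" "j \<noteq> 0" "j \<noteq> 2" using i by (auto dest: odd_pos)
  then have "3 \<le> j" by linarith
  then show ?thesis using ij by simp
qed

lemma order_h_part:
  assumes k: "0 < k"
  shows "order (cis (pi / real k)) (cpoly (h_part n lam)) =
    (\<Sum>i\<in>odd_multiples n k. n div i - count lam i)"
proof -
  let ?w = "cis (pi / real k)"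
  have "order ?w (cpoly (h_part n lam)) = (\<Sum>i\<in>{1..n}. order ?w (cpoly (onepx i) ^ (n div i - count lam i)))"
    unfolding h_part_def map_poly_of_int_prod map_poly_of_int_power by (rule order_prod) auto
  also have "\<dots> = (\<Sum>i\<in>{1..n}. if k dvd i \<and> odd (i div k) then n div i - count lam i else 0)"
    by (intro sum.cong refl)
      (auto simp: order_power order_onepx cis_pi_div_power_eq_minus_one_iff[OF k])
  also have "\<dots> = (\<Sum>i\<in>odd_multiples n k. n div i - count lam i)"
    unfolding odd_multiples_def by (rule sum.inter_filter[symmetric]) simp
  finally show ?thesis .
qed

lemma odd_multiple_parts_weight_le:
  assumes k: "0 < k" "k \<le> n" and lam: "lam \<in> partitions n"
  shows "k * count lam k + 3 * k * (\<Sum>i\<in>odd_multiples n k - {k}. count lam i) \<le> n"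
proof -
  let ?S = "odd_multiples n k"
  have "(\<Sum>i\<in>?S - {k}. 3 * k * count lam i) \<le> (\<Sum>i\<in>?S - {k}. i * count lam i)"
    using odd_multiples_ge_three_times[OF k(1)] by (intro sum_mono mult_right_mono) auto
  then have "k * count lam k + 3 * k * (\<Sum>i\<in>?S - {k}. count lam i) \<le> (\<Sum>i\<in>?S. i * count lam i)"
    using self_in_odd_multiples[OF k] by (simp add: sum.remove sum_distrib_left)
  also have "\<dots> \<le> (\<Sum>i\<in>{1..n}. i * count lam i)"
    by (intro sum_mono2) (auto simp: odd_multiples_def)
  finally show ?thesis using partition_weighted_count_sum[OF lam] by simp
qed

lemma sum_count_odd_multiples_le:
  assumes k: "0 < k" "k \<le> n" and lam: "lam \<in> partitions n"
  shows "(\<Sum>i\<in>odd_multiples n k. count lam i) \<le> n div k"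
proof -
  let ?r = "\<Sum>i\<in>odd_multiples n k - {k}. count lam i"
  have "(\<Sum>i\<in>odd_multiples n k. count lam i) = count lam k + ?r"
    using self_in_odd_multiples[OF k] by (simp add: sum.remove)
  moreover have "(count lam k + ?r) * k \<le> n"
    using odd_multiple_parts_weight_le[OF k lam] by (simp add: algebra_simps)
  ultimately show ?thesis using k by (simp add: less_eq_div_iff_mult_less_eq)
qed

definition extend_partition :: "nat \<Rightarrow> nat \<Rightarrow> nat multiset \<Rightarrow> nat multiset" where
  "extend_partition n k mu = replicate_mset (n div k) k + mu"

lemma inj_extend_partition: "inj_on (extend_partition n k) A"
  by (intro inj_onI) (simp add: extend_partition_def)

lemma extend_partition_in_partitions:
  assumes "0 < k" "mu \<in> partitions (n mod k)"
  shows "extend_partition n k mu \<in> partitions n"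
proof -
  have "sum_mset (extend_partition n k mu) = n div k * k + n mod k"
    using assms(2) by (simp add: extend_partition_def partitions_def)
  then show ?thesis using assms by (auto simp: partitions_def extend_partition_def)
qed

lemma count_partition_of_mod:
  assumes "mu \<in> partitions (n mod k)" "0 < k" "k \<le> i"
  shows "count mu i = 0"
proof -
  have "i \<notin># mu" using set_mset_partition[OF assms(1)] assms(2,3)
    by (meson atLeastAtMost_iff le_trans mod_less_divisor not_le subsetD)
  then show ?thesis by (simp add: not_in_iff)
qed

lemma sum_count_odd_multiples_extend_partition:
  assumes k: "0 < k" "k \<le> n" and mu: "mu \<in> partitions (n mod k)"
  shows "(\<Sum>i\<in>odd_multiples n k. count (extend_partition n k mu) i) = n div k"
proof -
  have "(\<Sum>i\<in>odd_multiples n k. count (extend_partition n k mu) i)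
      = (\<Sum>i\<in>odd_multiples n k. if i = k then n div k else 0)"
    using count_partition_of_mod[OF mu k(1)]
    by (intro sum.cong refl) (auto simp: extend_partition_def odd_multiples_def dest: dvd_imp_le)
  then show ?thesis using self_in_odd_multiples[OF k] by simp
qed

lemma sum_count_odd_multiples_eq_imp_extend_partition:
  assumes k: "0 < k" "k \<le> n" and lam: "lam \<in> partitions n"
    and eq: "(\<Sum>i\<in>odd_multiples n k. count lam i) = n div k"
  shows "lam \<in> extend_partition n k ` partitions (n mod k)"
proof -
  define r where "r = (\<Sum>i\<in>odd_multiples n k - {k}. count lam i)"
  define c where "c = count lam k"
  have split: "c + r = n div k"
    using eq self_in_odd_multiples[OF k] by (simp add: sum.remove r_def c_def)
  have "n < k * (c + r) + k"
    unfolding split using mod_less_divisor[OF k(1), of n] mult_div_mod_eq[of k n] by linarith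
  moreover have "k * c + 3 * k * r \<le> n"
    using odd_multiple_parts_weight_le[OF k lam] by (simp add: r_def c_def)
  ultimately have "k * (2 * r) < k * 1"
    unfolding distrib_left mult.left_commute[of 3 k] by linarith
  then have "r = 0" by simp
  then have count_k: "count lam k = n div k" using split by (simp add: c_def)
  define mu where "mu = filter_mset (\<lambda>x. x \<noteq> k) lam"
  have lam_eq: "lam = extend_partition n k mu"
    by (rule multiset_eqI) (simp add: mu_def extend_partition_def count_k)
  have "sum_mset lam = n div k * k + sum_mset mu" by (simp add: lam_eq extend_partition_def)
  then have "mu \<in> partitions (n mod k)"
    using lam by (auto simp: partitions_def mu_def) (metis add_left_cancel div_mult_mod_eq)
  then show ?thesis using lam_eq by blast
qed

lemma h_part_nonzero [simp]: "h_part n lam \<noteq> 0"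
  by (simp add: h_part_def)

lemma G_dvd_h_part: "lam \<in> partitions n \<Longrightarrow> G n dvd h_part n lam"
  unfolding G_def by (rule Gcd_dvd) simp

lemma replicate_one_in_partitions: "replicate_mset n 1 \<in> partitions n"
  by (auto simp: partitions_def)

lemma G_nonzero: "G n \<noteq> 0"
  using G_dvd_h_part[OF replicate_one_in_partitions, of n] h_part_nonzero by (metis dvd_0_left)

lemma onepx_dvd_onepx_odd_multiple:
  assumes k: "0 < k" and i: "i \<in> odd_multiples n k"
  shows "onepx k dvd onepx i"
proof -
  obtain j where ij: "i = k * j" "odd j"
    using i k by (auto simp: odd_multiples_def elim!: dvdE)
  have "monom 1 k - (-1) dvd (monom 1 k :: int poly) ^ j - (-1) ^ j"
    by (rule diff_dvd_power_diff)
  then show ?thesis using ij by (simp add: onepx_def monom_power add.commute)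
qed

lemma onepx_power_dvd_h_part:
  assumes k: "0 < k"
  shows "onepx k ^ (\<Sum>i\<in>odd_multiples n k. n div i - count lam i) dvd h_part n lam"
proof -
  have "onepx k ^ (\<Sum>i\<in>odd_multiples n k. n div i - count lam i)
      = (\<Prod>i\<in>odd_multiples n k. onepx k ^ (n div i - count lam i))"
    by (rule power_sum)
  also have "\<dots> dvd (\<Prod>i\<in>odd_multiples n k. onepx i ^ (n div i - count lam i))"
    by (intro prod_dvd_prod dvd_power_same onepx_dvd_onepx_odd_multiple[OF k])
  also have "\<dots> dvd h_part n lam"
    unfolding h_part_def by (intro prod_dvd_prod_subset) (auto simp: odd_multiples_def)
  finally show ?thesis .
qed

definition onepx_parts :: "nat \<Rightarrow> nat multiset \<Rightarrow> int poly" where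
  "onepx_parts n mu = (\<Prod>i\<in>{1..n}. onepx i ^ count mu i)"

lemma h_part_extend_partition_mult_onepx_parts:
  assumes k: "0 < k" and mu: "mu \<in> partitions (n mod k)"
  shows "h_part n (extend_partition n k mu) * onepx_parts n mu =
    (\<Prod>i\<in>{1..n}. onepx i ^ (n div i - (if i = k then n div k else 0)))"
  unfolding h_part_def onepx_parts_def prod.distrib[symmetric] power_add[symmetric]
proof (intro prod.cong refl)
  fix i assume i: "i \<in> {1..n}"
  have "count (extend_partition n k mu) i \<le> n div i"
    using count_partition_le extend_partition_in_partitions[OF k mu] i by simp
  then show "onepx i ^ (n div i - count (extend_partition n k mu) i + count mu i) =
      onepx i ^ (n div i - (if i = k then n div k else 0))"
    by (simp add: extend_partition_def)
qed

lemma one_plus_cis_power: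
  "1 + cis (pi / real k) ^ i = complex_of_real (2 * cos (real i * pi / (2 * real k))) * cis (pi / (2 * real k)) ^ i"
proof -
  define t where "t = real i * pi / (2 * real k)"
  have "1 + cis (2 * t) = complex_of_real (2 * cos t) * cis t"
    by (simp add: complex_eq_iff cos_double_cos sin_double power2_eq_square)
  moreover have "cis (pi / real k) ^ i = cis (2 * t)" "cis (pi / (2 * real k)) ^ i = cis t"
    by (simp_all add: DeMoivre t_def)
  ultimately show ?thesis by (simp add: t_def)
qed

lemma poly_onepx_parts_cis:
  assumes k: "0 < k" "k \<le> n" and mu: "mu \<in> partitions (n mod k)"
  obtains c where "c > 0"
    "poly (cpoly (onepx_parts n mu)) (cis (pi / real k)) = complex_of_real c * cis (pi / (2 * real k)) ^ (n mod k)"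
proof -
  let ?u = "cis (pi / (2 * real k))" and ?c = "\<lambda>i. 2 * cos (real i * pi / (2 * real k))"
  have sub: "set_mset mu \<subseteq> {1..n}"
    using set_mset_partition[OF mu] k mod_less_divisor[OF k(1), of n] by auto
  have "(\<Sum>i\<in>{1..n}. i * count mu i) = n mod k"
    using sum_mset_eq_sum_count[of "{1..n}" mu "\<lambda>x. x"] sub mu by (simp add: partitions_def)
  then have "(\<Prod>i\<in>{1..n}. ?u ^ (i * count mu i)) = ?u ^ (n mod k)"
    by (metis power_sum)
  moreover have "poly (cpoly (onepx_parts n mu)) (cis (pi / real k)) =
      (\<Prod>i\<in>{1..n}. complex_of_real (?c i ^ count mu i) * ?u ^ (i * count mu i))"
    by (simp add: onepx_parts_def poly_prod poly_cpoly_onepx one_plus_cis_power power_mult_distrib power_mult)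
  ultimately have "poly (cpoly (onepx_parts n mu)) (cis (pi / real k)) =
      complex_of_real (\<Prod>i\<in>{1..n}. ?c i ^ count mu i) * ?u ^ (n mod k)"
    by (simp add: prod.distrib)
  moreover have "0 < ?c i ^ count mu i" for i
  proof (cases "count mu i = 0")
    case False
    then have "1 \<le> i" "i < k" using set_mset_partition[OF mu] mod_less_divisor[OF k(1), of n] by force+
    then have "0 < real i * pi / (2 * real k)" "real i * pi / (2 * real k) < pi / 2"
      by (auto simp: field_simps)
    then show ?thesis by (simp add: cos_gt_zero_pi)
  qed simp
  ultimately show ?thesis
    using that[of "\<Prod>i\<in>{1..n}. ?c i ^ count mu i"] by (simp only: prod_pos)
qed

lemma num_eq_sum_h_part_div_G: "num n = (\<Sum>lam\<in>partitions n. h_part n lam div G n)"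
proof -
  have "(\<Sum>lam\<in>partitions n. h_part n lam) = G n * (\<Sum>lam\<in>partitions n. h_part n lam div G n)"
    unfolding sum_distrib_left by (intro sum.cong refl) (simp add: G_dvd_h_part)
  then show ?thesis by (simp add: num_def G_nonzero)
qed

context
  fixes n k :: nat
  assumes k: "0 < k" "k \<le> n"
begin

lemma order_h_part_cis:
  assumes lam: "lam \<in> partitions n"
  shows "order (cis (pi / real k)) (cpoly (h_part n lam)) =
    (\<Sum>i\<in>odd_multiples n k. n div i) - (\<Sum>i\<in>odd_multiples n k. count lam i)"
  unfolding order_h_part[OF k(1)]
  by (rule sum_subtractf_nat) (auto simp: odd_multiples_def intro: count_partition_le[OF lam])

lemma order_G_cis:
  "order (cis (pi / real k)) (cpoly (G n)) = (\<Sum>i\<in>odd_multiples n k. n div i) - n div k"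
    (is "?ord = ?E")
proof (rule antisym)
  define lam0 where "lam0 = extend_partition n k (replicate_mset (n mod k) 1)"
  have lam0: "lam0 \<in> partitions n"
    unfolding lam0_def by (intro extend_partition_in_partitions k replicate_one_in_partitions)
  have "?ord \<le> order (cis (pi / real k)) (cpoly (h_part n lam0))"
    by (intro dvd_imp_order_le map_poly_of_int_dvd G_dvd_h_part lam0) simp
  also have "\<dots> = ?E"
    using order_h_part_cis[OF lam0] sum_count_odd_multiples_extend_partition[OF k replicate_one_in_partitions]
    by (simp add: lam0_def)
  finally show "?ord \<le> ?E" .
  have "onepx k ^ ?E dvd G n"
    unfolding G_def
  proof (rule Gcd_greatest, safe)
    fix lam assume lam: "lam \<in> partitions n"
    have "?E \<le> (\<Sum>i\<in>odd_multiples n k. n div i - count lam i)"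
      using order_h_part_cis[OF lam] sum_count_odd_multiples_le[OF k lam] by (simp add: order_h_part[OF k(1)])
    then have "onepx k ^ ?E dvd onepx k ^ (\<Sum>i\<in>odd_multiples n k. n div i - count lam i)"
      by (rule le_imp_power_dvd)
    then show "onepx k ^ ?E dvd h_part n lam"
      using onepx_power_dvd_h_part[OF k(1)] by (rule dvd_trans)
  qed
  then have "order (cis (pi / real k)) (cpoly (onepx k ^ ?E)) \<le> ?ord"
    by (intro dvd_imp_order_le map_poly_of_int_dvd) (simp_all add: G_nonzero)
  moreover have "cis (pi / real k) ^ k = -1"
    using cis_pi_div_power_eq_minus_one_iff[OF k(1), of k] k by simp
  ultimately show "?E \<le> ?ord"
    using k by (simp add: order_power order_onepx)
qed

lemma order_h_part_div_G_cis:
  assumes lam: "lam \<in> partitions n"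
  shows "order (cis (pi / real k)) (cpoly (h_part n lam div G n)) =
    n div k - (\<Sum>i\<in>odd_multiples n k. count lam i)"
proof -
  let ?w = "cis (pi / real k)"
  have "h_part n lam = G n * (h_part n lam div G n)"
    using G_dvd_h_part[OF lam] by simp
  then have "order ?w (cpoly (h_part n lam)) = order ?w (cpoly (G n)) + order ?w (cpoly (h_part n lam div G n))"
    by (metis h_part_nonzero map_poly_of_int_eq_0_iff map_poly_of_int_mult order_mult)
  moreover have "n div k \<le> (\<Sum>i\<in>odd_multiples n k. n div i)"
    using self_in_odd_multiples[OF k] by (intro member_le_sum) auto
  ultimately show ?thesis
    using order_h_part_cis[OF lam] order_G_cis sum_count_odd_multiples_le[OF k lam] by simp
qed

lemma poly_h_part_div_G_cis_eq_0:
  assumes lam: "lam \<in> partitions n" and "lam \<notin> extend_partition n k ` partitions (n mod k)"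
  shows "poly (cpoly (h_part n lam div G n)) (cis (pi / real k)) = 0"
proof -
  have "(\<Sum>i\<in>odd_multiples n k. count lam i) \<noteq> n div k"
    using sum_count_odd_multiples_eq_imp_extend_partition[OF k lam] assms(2) by blast
  then have "order (cis (pi / real k)) (cpoly (h_part n lam div G n)) \<noteq> 0"
    using order_h_part_div_G_cis[OF lam] sum_count_odd_multiples_le[OF k lam] by simp
  then show ?thesis by (simp add: order_root)
qed

lemma poly_h_part_div_G_cis_nonzero:
  assumes mu: "mu \<in> partitions (n mod k)"
  shows "poly (cpoly (h_part n (extend_partition n k mu) div G n)) (cis (pi / real k)) \<noteq> 0"
proof -
  let ?lam = "extend_partition n k mu"
  have lam: "?lam \<in> partitions n" by (rule extend_partition_in_partitions[OF k(1) mu])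
  then have "h_part n ?lam div G n \<noteq> 0"
    using G_dvd_h_part by (metis dvd_mult_div_cancel h_part_nonzero mult_zero_right)
  moreover have "order (cis (pi / real k)) (cpoly (h_part n ?lam div G n)) = 0"
    using order_h_part_div_G_cis[OF lam] sum_count_odd_multiples_extend_partition[OF k mu] by simp
  ultimately show ?thesis by (simp add: order_root)
qed

lemma poly_num_cis:
  "poly (cpoly (num n)) (cis (pi / real k)) =
    (\<Sum>mu\<in>partitions (n mod k). poly (cpoly (h_part n (extend_partition n k mu) div G n)) (cis (pi / real k)))"
proof -
  let ?g = "\<lambda>lam. poly (cpoly (h_part n lam div G n)) (cis (pi / real k))"
  have "poly (cpoly (num n)) (cis (pi / real k)) = (\<Sum>lam\<in>partitions n. ?g lam)"
    by (simp add: num_eq_sum_h_part_div_G poly_sum)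
  also have "\<dots> = (\<Sum>lam\<in>extend_partition n k ` partitions (n mod k). ?g lam)"
    using extend_partition_in_partitions[OF k(1)] poly_h_part_div_G_cis_eq_0
    by (intro sum.mono_neutral_right finite_partitions) auto
  also have "\<dots> = (\<Sum>mu\<in>partitions (n mod k). ?g (extend_partition n k mu))"
    by (simp add: sum.reindex inj_extend_partition)
  finally show ?thesis .
qed

lemma poly_num_cis_nonzero: "poly (cpoly (num n)) (cis (pi / real k)) \<noteq> 0"
proof -
  let ?w = "cis (pi / real k)" and ?u = "cis (pi / (2 * real k))" and ?P = "partitions (n mod k)"
  let ?g = "\<lambda>mu. poly (cpoly (h_part n (extend_partition n k mu) div G n)) ?w"
  let ?v = "\<lambda>mu. poly (cpoly (onepx_parts n mu)) ?w"
  define B where "B = (\<Prod>i\<in>{1..n}. onepx i ^ (n div i - (if i = k then n div k else 0)))"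
  define \<beta> where "\<beta> = poly (cpoly (B div G n)) ?w"
  have gv: "?g mu * ?v mu = \<beta>" if mu: "mu \<in> ?P" for mu
  proof -
    let ?h = "h_part n (extend_partition n k mu)"
    have "G n * (?h div G n) = ?h"
      using G_dvd_h_part[OF extend_partition_in_partitions[OF k(1) mu]] by simp
    then have "B = G n * ((?h div G n) * onepx_parts n mu)"
      using h_part_extend_partition_mult_onepx_parts[OF k(1) mu]
      by (metis B_def mult.assoc)
    then have "B div G n = (?h div G n) * onepx_parts n mu" by (simp add: G_nonzero)
    then show ?thesis by (simp add: \<beta>_def)
  qed
  have re_pos: "0 < Re (?u ^ (n mod k) / ?v mu)" if mu: "mu \<in> ?P" for mu
  proof -
    obtain c where "c > 0" "?v mu = complex_of_real c * ?u ^ (n mod k)"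
      using poly_onepx_parts_cis[OF k mu] by blast
    then show ?thesis by simp
  qed
  have v_nonzero: "?v mu \<noteq> 0" if "mu \<in> ?P" for mu
    using re_pos[OF that] by auto
  have mu0: "replicate_mset (n mod k) 1 \<in> ?P" by (rule replicate_one_in_partitions)
  then have "\<beta> \<noteq> 0"
    using gv v_nonzero poly_h_part_div_G_cis_nonzero by (metis mult_eq_0_iff)
  have "poly (cpoly (num n)) ?w = (\<Sum>mu\<in>?P. \<beta> / ?v mu)"
    unfolding poly_num_cis by (intro sum.cong refl) (simp add: eq_divide_eq gv v_nonzero)
  also have "\<dots> = \<beta> / ?u ^ (n mod k) * (\<Sum>mu\<in>?P. ?u ^ (n mod k) / ?v mu)"
    by (simp add: sum_distrib_left)
  finally have num: "poly (cpoly (num n)) ?w = \<beta> / ?u ^ (n mod k) * (\<Sum>mu\<in>?P. ?u ^ (n mod k) / ?v mu)" .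
  have "0 < Re (\<Sum>mu\<in>?P. ?u ^ (n mod k) / ?v mu)"
    unfolding Re_sum using re_pos mu0
    by (intro sum_pos finite_partitions) auto
  then have "(\<Sum>mu\<in>?P. ?u ^ (n mod k) / ?v mu) \<noteq> 0"
    by (metis less_irrefl zero_complex.sel(1))
  then show ?thesis using num \<open>\<beta> \<noteq> 0\<close> by simp
qed

end

lemma den_star_eq_G_mult_den: "den_star n = G n * den n"
proof -
  have "h_part n lam dvd den_star n" for lam
    unfolding h_part_def den_star_def by (intro prod_dvd_prod le_imp_power_dvd) auto
  then have "G n dvd den_star n"
    using G_dvd_h_part[OF replicate_one_in_partitions] by (rule dvd_trans[rotated])
  then show ?thesis by (simp add: den_def)
qed

lemma prime_factor_den_cis_root:
  fixes p :: "int poly"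
  assumes p: "prime p" "p dvd den n"
  obtains k where "0 < k" "k \<le> n" "poly (cpoly p) (cis (pi / real k)) = 0"
proof -
  have "p dvd den_star n" using p(2) by (simp add: den_star_eq_G_mult_den)
  then obtain i where i: "i \<in> {1..n}" and "p dvd onepx i ^ (n div i)"
    unfolding den_star_def using p(1) by (auto simp: prime_dvd_prod_iff)
  then have pi: "p dvd onepx i" using p(1) prime_dvd_power by blast
  have "degree p \<noteq> 0"
  proof
    assume "degree p = 0"
    then obtain c where pc: "p = [:c:]" by (rule degree_eq_zeroE)
    then have "c dvd coeff (onepx i) 0" using pi const_poly_dvd_iff by blast
    moreover have "coeff (onepx i) 0 = 1" using i by (simp add: onepx_def coeff_monom)
    ultimately have "is_unit p" using pc by (simp add: is_unit_const_poly_iff)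
    then show False using p(1) by simp
  qed
  then obtain z where z: "poly (cpoly p) z = 0"
    using fundamental_theorem_of_algebra[of "cpoly p"] by (auto simp: constant_degree)
  then have "poly (cpoly (onepx i)) z = 0"
    using pi by (rule poly_cpoly_eq_0_if_dvd[rotated])
  then have "z ^ i = -1" by (simp add: poly_cpoly_onepx add_eq_0_iff)
  moreover have "0 < i" using i by simp
  ultimately obtain k where "0 < k" "k dvd i" "poly (cpoly p) (cis (pi / real k)) = 0"
    using int_poly_minus_one_root_cis_root z by blast
  moreover have "k \<le> n" using \<open>k dvd i\<close> i by (auto dest: dvd_imp_le)
  ultimately show ?thesis using that by blast
qed

theorem theorem1:
  fixes n :: nat
  assumes "1 \<le> n"
  shows "gcd (num n) (den n) = 1"
proof (rule ccontr)
  assume "gcd (num n) (den n) \<noteq> 1"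
  moreover have "den n \<noteq> 0"
    using den_star_eq_G_mult_den[of n] by (auto simp: den_star_def)
  ultimately obtain p where "p dvd gcd (num n) (den n)" "prime p"
    using prime_divisor_exists[of "gcd (num n) (den n)"] by (auto simp: is_unit_gcd_iff)
  then have "prime p" "p dvd num n" "p dvd den n" by simp_all
  then obtain k where k: "0 < k" "k \<le> n" and root: "poly (cpoly p) (cis (pi / real k)) = 0"
    using prime_factor_den_cis_root by blast
  have "poly (cpoly (num n)) (cis (pi / real k)) = 0"
    using \<open>p dvd num n\<close> root by (rule poly_cpoly_eq_0_if_dvd)
  then show False using poly_num_cis_nonzero[OF k] by simp
qed

end
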